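(* Let $k\in\mathbb{N}$ and let $P$ be a path with $k$ edges whose vertices in order are $x_0,x_1,\dots,x_k$. Let $L$ be an $m$-assignment for $P$ with $m\ge 2$. For each $(c,d)\in L(x_0)\times L(x_k)$, let $N(c,d)$ be the number of proper $L$-colorings of $P$ in which $x_0$ is colored $c$ and $x_k$ is colored $d$. Then for every such $(c,d)$, $$N(c,d)\ge \min\left\{\frac{(m-1)^k-(-1)^k}{m},\ \frac{(m-1)^k-(-1)^k}{m}+(-1)^k\right\}.$$ Moreover, there is a partition $\{A,B\}$ of $L(x_0)\times L(x_k)$ with $|A|=m$ and $|B|=m(m-1)$ such that $N(c,d)\ge \frac{(m-1)^k-(-1)^k}{m}+(-1)^k$ for all $(c,d)\in A$ and $N(c,d)\ge \frac{(m-1)^k-(-1)^k}{m}$ for all $(c,d)\in B$.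
   Context: An $m$-assignment $L$ for a graph assigns to each vertex $v$ a set $L(v)$ of exactly $m$ colors; a proper $L$-coloring is a proper vertex coloring $f$ with $f(v)\in L(v)$ for every vertex $v$. *)

theory Defs
  imports Complex_Main "HOL-Library.FuncSet"
begin

text \<open>The path P with k edges has vertices 0,1,...,k (vertex i is x_i) and edges {i, i+1}
  for i < k. A list assignment L gives each vertex i a set L i of colors.\<close>

definition m_assignment :: "nat \<Rightarrow> nat \<Rightarrow> (nat \<Rightarrow> 'c set) \<Rightarrow> bool" where
  "m_assignment k m L \<longleftrightarrow> (\<forall>i\<le>k. finite (L i) \<and> card (L i) = m)"

definition path_L_colorings :: "nat \<Rightarrow> (nat \<Rightarrow> 'c set) \<Rightarrow> (nat \<Rightarrow> 'c) set" where
  "path_L_colorings k L =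
     {f \<in> {0..k} \<rightarrow>\<^sub>E UNIV. (\<forall>i\<le>k. f i \<in> L i) \<and> (\<forall>i<k. f i \<noteq> f (Suc i))}"

definition N_path :: "nat \<Rightarrow> (nat \<Rightarrow> 'c set) \<Rightarrow> 'c \<Rightarrow> 'c \<Rightarrow> nat" where
  "N_path k L c d = card {f \<in> path_L_colorings k L. f 0 = c \<and> f k = d}"

end

theory Submission
  imports Defs
begin

text \<open>Summing over the colour of the last vertex gives
  N_{k+1}(c, e) = \<Sum>{N_k(c, d) | d \<in> L(x_k) - {e}}. By induction on k there is a bijection
  \<phi> : L(x_0) \<rightarrow> L(x_k) with N_k(c, \<phi> c) \<ge> b_k and N_k(c, d) \<ge> a_k for d \<noteq> \<phi> c, where
  a_{k+1} = b_k + (m - 2) a_k and b_{k+1} = (m - 1) a_k. In the inductive step \<phi> is composed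
  with a bijection L(x_k) \<rightarrow> L(x_{k+1}) fixing L(x_k) \<inter> L(x_{k+1}) pointwise, so the new
  partner e of c is either \<phi> c or a colour outside L(x_k); either way the sum for N_{k+1}(c, e)
  contains the m - 1 terms N_k(c, d) with d \<noteq> \<phi> c. For every other e the sum contains
  N_k(c, \<phi> c) and at least m - 2 further terms. Solving the recurrence gives the closed forms,
  and the partition is the graph of \<phi> and its complement.\<close>

lemma finite_path_L_colorings:
  assumes "\<forall>i\<le>k. finite (L i)"
  shows "finite (path_L_colorings k L)"
proof (rule finite_subset)
  show "path_L_colorings k L \<subseteq> Pi\<^sub>E {0..k} L"
    unfolding path_L_colorings_def by (auto simp: PiE_iff extensional_def)
  show "finite (Pi\<^sub>E {0..k} L)"
    using assms by (intro finite_PiE) auto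
qed

lemma path_L_colorings_Suc_ends_eq_image:
  assumes "e \<in> L (Suc k)"
  shows "{f \<in> path_L_colorings (Suc k) L. f 0 = c \<and> f (Suc k) = e}
       = (\<lambda>g. g(Suc k := e)) ` {g \<in> path_L_colorings k L. g 0 = c \<and> g k \<in> L k - {e}}"
proof (intro equalityI subsetI)
  fix f assume f: "f \<in> {f \<in> path_L_colorings (Suc k) L. f 0 = c \<and> f (Suc k) = e}"
  then have "f = (restrict f {0..k})(Suc k := e)"
    by (auto simp: path_L_colorings_def PiE_iff extensional_def fun_eq_iff)
  moreover have "restrict f {0..k} \<in> {g \<in> path_L_colorings k L. g 0 = c \<and> g k \<in> L k - {e}}"
    using f by (auto simp: path_L_colorings_def)
  ultimately show "f \<in> (\<lambda>g. g(Suc k := e)) ` {g \<in> path_L_colorings k L. g 0 = c \<and> g k \<in> L k - {e}}"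
    by blast
next
  fix f assume "f \<in> (\<lambda>g. g(Suc k := e)) ` {g \<in> path_L_colorings k L. g 0 = c \<and> g k \<in> L k - {e}}"
  then obtain g where f: "f = g(Suc k := e)" and g: "g \<in> extensional {0..k}"
    and g_L: "\<forall>i\<le>k. g i \<in> L i" and g_proper: "\<forall>i<k. g i \<noteq> g (Suc i)"
    and g_ends: "g 0 = c" "g k \<noteq> e"
    by (auto simp: path_L_colorings_def PiE_def)
  have "f \<in> extensional {0..Suc k}"
    using g by (simp add: f extensional_def)
  moreover have "\<forall>i\<le>Suc k. f i \<in> L i"
    using g_L assms by (simp add: f le_Suc_eq)
  moreover have "\<forall>i<Suc k. f i \<noteq> f (Suc i)"
    using g_proper g_ends by (simp add: f less_Suc_eq)
  ultimately show "f \<in> {f \<in> path_L_colorings (Suc k) L. f 0 = c \<and> f (Suc k) = e}"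
    using g_ends by (simp add: path_L_colorings_def PiE_def f)
qed

lemma inj_on_fun_upd_extensional:
  assumes "x \<notin> A"
  shows "inj_on (\<lambda>g. g(x := y)) (extensional A)"
proof (rule inj_onI)
  fix g g' assume "g \<in> extensional A" "g' \<in> extensional A" "g(x := y) = g'(x := y)"
  then show "g = g'"
    using assms by (metis extensional_restrict restrict_fupd)
qed

lemma N_path_Suc:
  assumes "\<forall>i\<le>Suc k. finite (L i)" and "e \<in> L (Suc k)"
  shows "N_path (Suc k) L c e = (\<Sum>d\<in>L k - {e}. N_path k L c d)"
proof -
  let ?G = "{g \<in> path_L_colorings k L. g 0 = c \<and> g k \<in> L k - {e}}"
  have "?G \<subseteq> extensional {0..k}"
    by (auto simp: path_L_colorings_def PiE_def)
  then have "inj_on (\<lambda>g. g(Suc k := e)) ?G"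
    by (rule inj_on_subset[OF inj_on_fun_upd_extensional, rotated]) simp
  then have "N_path (Suc k) L c e = card ?G"
    unfolding N_path_def path_L_colorings_Suc_ends_eq_image[of e L k c, OF assms(2)] by (rule card_image)
  also have "?G = (\<Union>d\<in>L k - {e}. {g \<in> path_L_colorings k L. g 0 = c \<and> g k = d})"
    by blast
  also have "card \<dots> = (\<Sum>d\<in>L k - {e}. N_path k L c d)"
    unfolding N_path_def
  proof (rule card_UN_disjoint)
    show "finite (L k - {e})"
      using assms(1) by simp
    show "\<forall>d\<in>L k - {e}. finite {g \<in> path_L_colorings k L. g 0 = c \<and> g k = d}"
      using assms(1) finite_path_L_colorings[of k L] by simp
  qed blast
  finally show ?thesis .
qed

lemma exists_bij_betw_fixing_Int:
  assumes "finite U" "finite T" "card U = card T"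
  shows "\<exists>h. bij_betw h U T \<and> (\<forall>x\<in>U \<inter> T. h x = x) \<and> (\<forall>x\<in>U - T. h x \<notin> U)"
proof -
  have "card (U - T) = card (T - U)"
    using assms by (simp add: card_Diff_subset_Int Int_commute)
  then obtain g where g: "bij_betw g (U - T) (T - U)"
    using assms by (metis finite_Diff finite_same_card_bij)
  define h where "h x = (if x \<in> T then x else g x)" for x
  have "bij_betw h (U \<inter> T) (U \<inter> T)"
    by (simp add: h_def bij_betw_def inj_on_def)
  moreover have "bij_betw h (U - T) (T - U)"
    using g by (rule bij_betw_cong[THEN iffD1, rotated]) (simp add: h_def)
  ultimately have "bij_betw h ((U \<inter> T) \<union> (U - T)) ((U \<inter> T) \<union> (T - U))"
    by (rule bij_betw_combine) auto
  moreover have "(\<forall>x\<in>U \<inter> T. h x = x) \<and> (\<forall>x\<in>U - T. h x \<notin> U)"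
    using g by (auto simp: h_def bij_betw_def)
  ultimately show ?thesis
    by (metis Int_Diff_Un inf_commute)
qed

lemma sum_ge_point_plus_rest:
  fixes f :: "'a \<Rightarrow> nat"
  assumes "finite S" "x \<in> S" "b \<le> f x" "\<forall>y\<in>S - {x}. a \<le> f y"
  shows "b + (card S - 1) * a \<le> sum f S"
proof -
  have "(card S - 1) * a \<le> sum f (S - {x})"
    using assms sum_bounded_below[of "S - {x}" a f] by (simp add: mult.commute)
  then show ?thesis
    using assms by (simp add: sum.remove)
qed

lemma sum_Diff1_lower_bounds:
  fixes f :: "'a \<Rightarrow> nat"
  assumes "finite U" "x \<in> U" "b \<le> f x" "\<forall>y\<in>U - {x}. a \<le> f y"
  shows "e \<noteq> x \<Longrightarrow> b + (card U - 2) * a \<le> sum f (U - {e})"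
    and "e = x \<or> e \<notin> U \<Longrightarrow> (card U - 1) * a \<le> sum f (U - {e})"
proof -
  have whole: "b + (card U - 1) * a \<le> sum f U"
    using assms by (rule sum_ge_point_plus_rest)
  show "e \<noteq> x \<Longrightarrow> b + (card U - 2) * a \<le> sum f (U - {e})"
  proof (cases "e \<in> U")
    case True
    assume "e \<noteq> x"
    then have "b + (card (U - {e}) - 1) * a \<le> sum f (U - {e})"
      using assms by (intro sum_ge_point_plus_rest) auto
    then show ?thesis
      using True assms(1) by (simp add: numeral_2_eq_2)
  next
    case False
    have "b + (card U - 2) * a \<le> b + (card U - 1) * a"
      by (intro add_left_mono mult_le_mono1) simp
    also note whole
    also have "sum f U = sum f (U - {e})"
      using False by simp
    finally show ?thesis .
  qed
  show "e = x \<or> e \<notin> U \<Longrightarrow> (card U - 1) * a \<le> sum f (U - {e})"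
  proof (elim disjE)
    assume "e = x"
    then show ?thesis
      using assms sum_bounded_below[of "U - {x}" a f] by (simp add: mult.commute)
  qed (use whole in simp)
qed

text \<open>a_k and b_k: for m \<ge> 2 these are the exact numbers of colourings with distinct, resp.
  equal, end colours when all lists coincide.\<close>

fun N_off_bound :: "nat \<Rightarrow> nat \<Rightarrow> nat" and N_diag_bound :: "nat \<Rightarrow> nat \<Rightarrow> nat" where
  "N_off_bound m 0 = 0"
| "N_diag_bound m 0 = 1"
| "N_off_bound m (Suc k) = N_diag_bound m k + (m - 2) * N_off_bound m k"
| "N_diag_bound m (Suc k) = (m - 1) * N_off_bound m k"

lemma N_off_bound_N_diag_bound_closed_form:
  assumes "m \<ge> 2"
  shows "real (N_off_bound m k) = (real (m - 1) ^ k - (-1) ^ k) / real m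
       \<and> real (N_diag_bound m k) = (real (m - 1) ^ k - (-1) ^ k) / real m + (-1) ^ k"
proof (induction k)
  case (Suc k)
  define x where "x = real (m - 2)"
  define q s where "q = (x + 1) ^ k" and "s = (-1 :: real) ^ k"
  have reals: "real (m - 1) = x + 1" "real m = x + 2"
    using assms by (auto simp: x_def)
  have off: "real (N_off_bound m k) = (q - s) / (x + 2)"
    and diag: "real (N_diag_bound m k) = (q - s) / (x + 2) + s"
    using Suc.IH unfolding reals q_def s_def by simp_all
  have "x + 2 \<noteq> 0"
    using reals(2) assms by linarith
  then have "(q - s) / (x + 2) + s + x * ((q - s) / (x + 2)) = ((x + 1) * q + s) / (x + 2)"
    and "(x + 1) * ((q - s) / (x + 2)) = ((x + 1) * q + s) / (x + 2) - s"
    by (simp_all add: divide_simps) (simp_all add: algebra_simps)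
  moreover have "real (N_off_bound m (Suc k)) = real (N_diag_bound m k) + x * real (N_off_bound m k)"
    and "real (N_diag_bound m (Suc k)) = (x + 1) * real (N_off_bound m k)"
    unfolding N_off_bound.simps N_diag_bound.simps of_nat_add of_nat_mult reals(1) x_def by simp_all
  ultimately show ?case
    unfolding reals off diag q_def s_def by simp
qed simp

lemma N_path_0_diag:
  assumes "c \<in> L 0"
  shows "N_path 0 L c c = 1"
proof -
  have "{f \<in> path_L_colorings 0 L. f 0 = c \<and> f 0 = c} = {restrict (\<lambda>_. c) {0..0}}"
    using assms by (auto simp: path_L_colorings_def PiE_iff extensional_def fun_eq_iff)
  then show ?thesis
    unfolding N_path_def by simp
qed

lemma exists_bij_with_N_path_bounds:
  assumes "m_assignment k m L"
  shows "\<exists>\<phi>. bij_betw \<phi> (L 0) (L k) \<and> (\<forall>c\<in>L 0. N_diag_bound m k \<le> N_path k L c (\<phi> c)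
           \<and> (\<forall>d\<in>L k - {\<phi> c}. N_off_bound m k \<le> N_path k L c d))"
  using assms
proof (induction k)
  case 0
  then show ?case
    by (intro exI[of _ "\<lambda>c. c"]) (simp add: N_path_0_diag bij_betw_def)
next
  case (Suc k)
  have fin: "\<forall>i\<le>Suc k. finite (L i)" and card: "card (L k) = m" "card (L (Suc k)) = m"
    using Suc.prems by (auto simp: m_assignment_def)
  have "m_assignment k m L"
    using Suc.prems by (simp add: m_assignment_def)
  then obtain \<phi> where \<phi>: "bij_betw \<phi> (L 0) (L k)"
    and bounds_k: "\<forall>c\<in>L 0. N_diag_bound m k \<le> N_path k L c (\<phi> c)
           \<and> (\<forall>d\<in>L k - {\<phi> c}. N_off_bound m k \<le> N_path k L c d)"
    using Suc.IH[OF \<open>m_assignment k m L\<close>] by blast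
  have diag: "N_diag_bound m k \<le> N_path k L c (\<phi> c)"
    and off: "\<forall>d\<in>L k - {\<phi> c}. N_off_bound m k \<le> N_path k L c d" if "c \<in> L 0" for c
    using bounds_k that by simp_all
  obtain h where h: "bij_betw h (L k) (L (Suc k))"
    and h_id: "\<forall>x\<in>L k \<inter> L (Suc k). h x = x" and h_out: "\<forall>x\<in>L k - L (Suc k). h x \<notin> L k"
    using exists_bij_betw_fixing_Int[of "L k" "L (Suc k)"] fin card by auto
  have bounds: "N_diag_bound m (Suc k) \<le> N_path (Suc k) L c (h (\<phi> c))
      \<and> (\<forall>e\<in>L (Suc k) - {h (\<phi> c)}. N_off_bound m (Suc k) \<le> N_path (Suc k) L c e)"
    if c: "c \<in> L 0" for c
  proof -
    have \<phi>c: "\<phi> c \<in> L k"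
      using \<phi> c by (auto simp: bij_betw_def)
    have "finite (L k)"
      using fin by simp
    note sum_bounds = sum_Diff1_lower_bounds[OF this \<phi>c diag[OF c] off[OF c], unfolded card]
    have "h (\<phi> c) = \<phi> c \<or> h (\<phi> c) \<notin> L k"
      using h_id h_out \<phi>c by blast
    moreover have "h (\<phi> c) \<in> L (Suc k)"
      using h \<phi>c by (auto simp: bij_betw_def)
    ultimately have "N_diag_bound m (Suc k) \<le> N_path (Suc k) L c (h (\<phi> c))"
      using sum_bounds(2) by (simp add: N_path_Suc[OF fin])
    moreover have "N_off_bound m (Suc k) \<le> N_path (Suc k) L c e"
      if e: "e \<in> L (Suc k) - {h (\<phi> c)}" for e
    proof -
      have "e \<noteq> \<phi> c"
        using h_id \<phi>c e by auto
      then show ?thesis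
        using sum_bounds(1) e by (simp add: N_path_Suc[OF fin] add.commute)
    qed
    ultimately show ?thesis
      by blast
  qed
  have "bij_betw (\<lambda>c. h (\<phi> c)) (L 0) (L (Suc k))"
    using bij_betw_trans[OF \<phi> h] by (simp add: comp_def)
  with bounds show ?case
    by (intro exI[of _ "\<lambda>c. h (\<phi> c)"]) simp
qed

lemma card_graph_and_complement:
  assumes "bij_betw \<phi> A B" and "finite A"
  shows "card ((\<lambda>a. (a, \<phi> a)) ` A) = card A"
    and "card (A \<times> B - (\<lambda>a. (a, \<phi> a)) ` A) = card A * (card A - 1)"
proof -
  show graph: "card ((\<lambda>a. (a, \<phi> a)) ` A) = card A"
    by (rule card_image) (simp add: inj_on_def)
  have "(\<lambda>a. (a, \<phi> a)) ` A \<subseteq> A \<times> B" and "card B = card A" and "finite B"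
    using assms by (auto simp: bij_betw_def card_image)
  then show "card (A \<times> B - (\<lambda>a. (a, \<phi> a)) ` A) = card A * (card A - 1)"
    using assms(2) graph
    by (simp add: card_Diff_subset finite_subset card_cartesian_product diff_mult_distrib2)
qed

theorem lemma2p7:
  fixes k m :: nat and L :: "nat \<Rightarrow> 'c set"
  assumes "m_assignment k m L" and "m \<ge> 2"
  shows "(\<forall>c\<in>L 0. \<forall>d\<in>L k.
            real (N_path k L c d) \<ge>
              min ((real (m - 1) ^ k - (-1) ^ k) / real m)
                  ((real (m - 1) ^ k - (-1) ^ k) / real m + (-1) ^ k))
       \<and> (\<exists>A B. A \<union> B = L 0 \<times> L k \<and> A \<inter> B = {} \<and> card A = m \<and> card B = m * (m - 1)
            \<and> (\<forall>(c, d)\<in>A. real (N_path k L c d) \<ge> (real (m - 1) ^ k - (-1) ^ k) / real m + (-1) ^ k)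
            \<and> (\<forall>(c, d)\<in>B. real (N_path k L c d) \<ge> (real (m - 1) ^ k - (-1) ^ k) / real m))"
proof -
  let ?off = "(real (m - 1) ^ k - (-1) ^ k) / real m"
  let ?diag = "(real (m - 1) ^ k - (-1) ^ k) / real m + (-1) ^ k"
  obtain \<phi> where \<phi>: "bij_betw \<phi> (L 0) (L k)"
    and bounds: "\<forall>c\<in>L 0. N_diag_bound m k \<le> N_path k L c (\<phi> c)
           \<and> (\<forall>d\<in>L k - {\<phi> c}. N_off_bound m k \<le> N_path k L c d)"
    using exists_bij_with_N_path_bounds[OF assms(1)] by blast
  have closed_form: "real (N_off_bound m k) = ?off" "real (N_diag_bound m k) = ?diag"
    using N_off_bound_N_diag_bound_closed_form[OF assms(2)] by simp_all
  have diag: "?diag \<le> real (N_path k L c (\<phi> c))" if "c \<in> L 0" for c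
    using bounds that unfolding closed_form(2)[symmetric] by simp
  have off: "?off \<le> real (N_path k L c d)" if "c \<in> L 0" "d \<in> L k - {\<phi> c}" for c d
    using bounds that unfolding closed_form(1)[symmetric] by simp
  have "finite (L 0)" and card: "card (L 0) = m"
    using assms(1) by (auto simp: m_assignment_def)
  define A where "A = (\<lambda>c. (c, \<phi> c)) ` L 0"
  have card_A: "card A = m" and card_B: "card (L 0 \<times> L k - A) = m * (m - 1)"
    using card_graph_and_complement[OF \<phi> \<open>finite (L 0)\<close>] card by (simp_all add: A_def)
  have "A \<subseteq> L 0 \<times> L k"
    using \<phi> by (auto simp: A_def bij_betw_def)
  then have partition: "A \<union> (L 0 \<times> L k - A) = L 0 \<times> L k" "A \<inter> (L 0 \<times> L k - A) = {}"
    by auto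
  have min_bound: "\<forall>c\<in>L 0. \<forall>d\<in>L k. min ?off ?diag \<le> real (N_path k L c d)"
  proof (intro ballI)
    fix c d assume "c \<in> L 0" "d \<in> L k"
    then show "min ?off ?diag \<le> real (N_path k L c d)"
      using diag[of c] off[of c d] by (cases "d = \<phi> c") (simp_all add: min_le_iff_disj)
  qed
  have A_bound: "\<forall>(c, d)\<in>A. ?diag \<le> real (N_path k L c d)"
    using diag by (auto simp: A_def)
  have B_bound: "\<forall>(c, d)\<in>L 0 \<times> L k - A. ?off \<le> real (N_path k L c d)"
    using off by (auto simp: A_def)
  show ?thesis
    by (intro conjI exI[of _ A] exI[of _ "L 0 \<times> L k - A"])
      (fact min_bound partition card_A card_B A_bound B_bound)+
qed

end
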